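(* Let $A$ be a finite poset and $t>0$ an integer, let $k$ be the least natural number with $2^k>\max(|A|-t,\,t-1)$, and define $$\langle A\rangle_t:=\Big(\big((A/C_{2^k-t})+C_{2^k}\big)/C_t\Big)+A$$ (all constituents disjoint, with a fresh copy of $A$ as the last summand). Then $g(\langle A\rangle_t)=2^{k+1}$ if $g(A)<t$, and $g(\langle A\rangle_t)=0$ if $g(A)\ge t$.
   Context: For a finite poset $P$ and $x\in P$ let $P_x:=\{y\in P: x\not\le y\}$. The g-number is $g(P):=\operatorname{mex}\{g(P_x):x\in P\}$, where mex is the least natural number not in the set ($g(\emptyset)=0$). $P+Q$ (parallel union) is the disjoint union with points of $P$ incomparable to points of $Q$; $P/Q$ (series union) is the disjoint union with orders kept and every point of $P$ above every point of $Q$. $C_m$ is the chain with $m$ points ($C_0=\emptyset$). *)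

theory Defs
  imports Main
begin

text \<open>A poset is represented as a pair (carrier, order relation); the relation
  only matters on the carrier.\<close>

type_synonym 'a poset = "'a set \<times> ('a \<Rightarrow> 'a \<Rightarrow> bool)"

definition finite_poset :: "'a poset \<Rightarrow> bool" where
  "finite_poset P \<longleftrightarrow> finite (fst P) \<and>
     (\<forall>x\<in>fst P. snd P x x) \<and>
     (\<forall>x\<in>fst P. \<forall>y\<in>fst P. snd P x y \<and> snd P y x \<longrightarrow> x = y) \<and>
     (\<forall>x\<in>fst P. \<forall>y\<in>fst P. \<forall>z\<in>fst P. snd P x y \<and> snd P y z \<longrightarrow> snd P x z)"

definition mex :: "nat set \<Rightarrow> nat" where
  "mex N = (LEAST n. n \<notin> N)"

definition Pdown :: "('a \<Rightarrow> 'a \<Rightarrow> bool) \<Rightarrow> 'a set \<Rightarrow> 'a \<Rightarrow> 'a set" where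
  "Pdown le S x = {y \<in> S. \<not> le x y}"

text \<open>g-number of the poset (S, le). The recursion ranges over x in S with le x x
  (always true in a poset); this guard only serves termination.\<close>
function gnum_aux :: "('a \<Rightarrow> 'a \<Rightarrow> bool) \<Rightarrow> 'a set \<Rightarrow> nat" where
  "gnum_aux le S = (if finite S then mex ((\<lambda>x. gnum_aux le (Pdown le S x)) ` {x \<in> S. le x x}) else 0)"
  by auto
termination
proof (relation "measure (\<lambda>(le, S). card S)")
  fix le :: "'a \<Rightarrow> 'a \<Rightarrow> bool" and S x
  assume "finite S" "x \<in> {x \<in> S. le x x}"
  then have "Pdown le S x \<subset> S" unfolding Pdown_def by auto
  with \<open>finite S\<close> show "((le, Pdown le S x), le, S) \<in> measure (\<lambda>(le, S). card S)"
    by (simp add: psubset_card_mono)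
qed auto

definition g :: "'a poset \<Rightarrow> nat" where
  "g P = gnum_aux (snd P) (fst P)"

definition par :: "'a poset \<Rightarrow> 'b poset \<Rightarrow> ('a + 'b) poset" where
  "par P Q = (Inl ` fst P \<union> Inr ` fst Q,
     (\<lambda>u v. case (u, v) of (Inl a, Inl b) \<Rightarrow> snd P a b
                         | (Inr a, Inr b) \<Rightarrow> snd Q a b
                         | _ \<Rightarrow> False))"

text \<open>Series union P / Q: every point of P above every point of Q.\<close>
definition ser :: "'a poset \<Rightarrow> 'b poset \<Rightarrow> ('a + 'b) poset" where
  "ser P Q = (Inl ` fst P \<union> Inr ` fst Q,
     (\<lambda>u v. case (u, v) of (Inl a, Inl b) \<Rightarrow> snd P a b
                         | (Inr a, Inr b) \<Rightarrow> snd Q a b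
                         | (Inr a, Inl b) \<Rightarrow> True
                         | (Inl a, Inr b) \<Rightarrow> False))"

definition chain :: "nat \<Rightarrow> nat poset" where
  "chain m = ({..<m}, (\<le>))"

definition angle :: "'a poset \<Rightarrow> nat \<Rightarrow> ((((('a + nat) + nat) + nat) + 'a) poset)" where
  "angle A t = (let k = (LEAST k. 2 ^ k > max (int (card (fst A)) - int t) (int t - 1)) in
     par (ser (par (ser A (chain (2 ^ k - t))) (chain (2 ^ k))) (chain t)) A)"

end

theory Submission
  imports Defs
begin

text \<open>The g-number behaves like a Sprague--Grundy value: a parallel union has the
  nim-sum (bitwise XOR) of the g-numbers, putting a poset on top of the chain \<open>C\<^sub>t\<close>
  adds \<open>t\<close>, and \<open>g(C\<^sub>m) = m\<close>. Hence, with \<open>K = 2\<^sup>k\<close> and \<open>a = g(A)\<close>,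
  \<open>g(\<langle>A\<rangle>\<^sub>t) = (t + ((K - t + a) XOR K)) XOR a\<close>. The choice of \<open>k\<close> makes \<open>t \<le> K\<close> and
  \<open>a \<le> |A| < K + t\<close>, so adding or removing the bit \<open>K\<close> is ordinary addition: for
  \<open>a < t\<close> the value is \<open>(2K + a) XOR a = 2K\<close>, and for \<open>a \<ge> t\<close> it is \<open>a XOR a = 0\<close>.\<close>

unbundle bit_operations_syntax

lemma xor_div_two: "((m::nat) XOR n) div 2 = m div 2 XOR n div 2"
  by (subst xor_nat_rec) simp

lemma nat_less_iff_div_two:
  "(m::nat) < n \<longleftrightarrow> m div 2 < n div 2 \<or> (m div 2 = n div 2 \<and> even m \<and> odd n)"
  by presburger

lemma less_xor_cases:
  fixes a b c :: nat
  assumes "c < a XOR b"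
  shows "c XOR b < a \<or> c XOR a < b"
  using assms
proof (induction "a XOR b" arbitrary: a b c rule: less_induct)
  case less
  from less.prems consider
      (halves_less) "c div 2 < a div 2 XOR b div 2"
    | (halves_eq) "c div 2 = a div 2 XOR b div 2" "even c" "odd a \<noteq> odd b"
    unfolding nat_less_iff_div_two[of c] xor_div_two even_xor_iff by blast
  then show ?case
  proof cases
    case halves_less
    have "(a XOR b) div 2 < a XOR b"
      using less.prems by simp
    then have "c div 2 XOR b div 2 < a div 2 \<or> c div 2 XOR a div 2 < b div 2"
      using less.hyps halves_less unfolding xor_div_two by blast
    then show ?thesis
      unfolding nat_less_iff_div_two[of "c XOR b"] nat_less_iff_div_two[of "c XOR a"] xor_div_two
      by blast
  next
    case halves_eq
    then have "(c XOR b) div 2 = a div 2" "(c XOR a) div 2 = b div 2"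
      by (simp_all add: xor_div_two ac_simps flip: xor.assoc)
    with halves_eq show ?thesis
      unfolding nat_less_iff_div_two[of "c XOR b"] nat_less_iff_div_two[of "c XOR a"] even_xor_iff
      by auto
  qed
qed

lemma xor_exp_eq_add:
  assumes "(n::nat) < 2 ^ k"
  shows "n XOR 2 ^ k = n + 2 ^ k"
proof -
  have "\<not> bit n k"
    using assms bit_take_bit_iff[of k n k] by (simp add: take_bit_nat_eq_self)
  then show ?thesis
    by (simp add: disjunctive_add_eq_xor and_exp_eq_0_iff_not_bit)
qed

lemma mex_eqI: "n \<notin> N \<Longrightarrow> (\<And>m. m < n \<Longrightarrow> m \<in> N) \<Longrightarrow> mex N = n"
  unfolding mex_def by (rule Least_equality) (auto simp: not_less[symmetric])

lemma mex_notin: "finite N \<Longrightarrow> mex N \<notin> N"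
  unfolding mex_def by (rule LeastI_ex) (use ex_new_if_finite[OF infinite_UNIV_nat] in auto)

lemma less_mex_imp_mem: "m < mex N \<Longrightarrow> m \<in> N"
  unfolding mex_def using not_less_Least by blast

lemma mex_le: "n \<notin> N \<Longrightarrow> mex N \<le> n"
  unfolding mex_def by (rule Least_le)

lemma mex_lessThan: "mex {..<n} = n"
  by (rule mex_eqI) auto

lemma mex_shift:
  assumes "finite N"
  shows "mex ((\<lambda>n. t + n) ` N \<union> {..<t}) = t + mex N"
proof (rule mex_eqI)
  show "t + mex N \<notin> (\<lambda>n. t + n) ` N \<union> {..<t}"
    using mex_notin[OF assms] by auto
next
  fix m assume m: "m < t + mex N"
  show "m \<in> (\<lambda>n. t + n) ` N \<union> {..<t}"
  proof (cases "m < t")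
    case False
    with m have "m - t \<in> N"
      by (intro less_mex_imp_mem) simp
    moreover have "m = t + (m - t)"
      using False by simp
    ultimately show ?thesis by blast
  qed simp
qed

lemma mex_nim_sum:
  assumes "finite M" "finite N"
  shows "mex ((\<lambda>m. m XOR mex N) ` M \<union> (\<lambda>n. mex M XOR n) ` N) = mex M XOR mex N"
proof (rule mex_eqI)
  have "m XOR mex N \<noteq> mex M XOR mex N" if "m \<in> M" for m
    using that mex_notin[OF assms(1)] by (metis xor.assoc xor_self_eq xor.right_neutral)
  moreover have "mex M XOR n \<noteq> mex M XOR mex N" if "n \<in> N" for n
    using that mex_notin[OF assms(2)] by (metis xor.assoc xor.left_neutral xor_self_eq)
  ultimately show "mex M XOR mex N \<notin> (\<lambda>m. m XOR mex N) ` M \<union> (\<lambda>n. mex M XOR n) ` N"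
    by force
next
  fix c assume "c < mex M XOR mex N"
  then consider "c XOR mex N < mex M" | "c XOR mex M < mex N"
    using less_xor_cases by blast
  then show "c \<in> (\<lambda>m. m XOR mex N) ` M \<union> (\<lambda>n. mex M XOR n) ` N"
  proof cases
    case 1
    then have "c XOR mex N \<in> M" by (rule less_mex_imp_mem)
    moreover have "c = (c XOR mex N) XOR mex N" by (simp add: xor.assoc)
    ultimately show ?thesis by blast
  next
    case 2
    then have "c XOR mex M \<in> N" by (rule less_mex_imp_mem)
    moreover have "c = mex M XOR (c XOR mex M)" by (simp add: ac_simps flip: xor.assoc)
    ultimately show ?thesis by blast
  qed
qed

definition follower_values :: "('a \<Rightarrow> 'a \<Rightarrow> bool) \<Rightarrow> 'a set \<Rightarrow> nat set" where
  "follower_values le S = (\<lambda>x. gnum_aux le (Pdown le S x)) ` {x \<in> S. le x x}"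

declare gnum_aux.simps[simp del]

lemma gnum_aux_eq_mex: "finite S \<Longrightarrow> gnum_aux le S = mex (follower_values le S)"
  unfolding follower_values_def by (subst gnum_aux.simps) simp

lemma finite_follower_values: "finite S \<Longrightarrow> finite (follower_values le S)"
  unfolding follower_values_def by simp

lemma finite_Pdown: "finite S \<Longrightarrow> finite (Pdown le S x)"
  unfolding Pdown_def by auto

lemma card_Pdown_less: "finite S \<Longrightarrow> x \<in> S \<Longrightarrow> le x x \<Longrightarrow> card (Pdown le S x) < card S"
  unfolding Pdown_def by (rule psubset_card_mono) auto

lemma gnum_aux_le_card: "finite S \<Longrightarrow> gnum_aux le S \<le> card S"
proof (induction "card S" arbitrary: S rule: less_induct)
  case less
  have "card S \<noteq> gnum_aux le (Pdown le S x)" if "x \<in> S" "le x x" for x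
    using less.hyps[of "Pdown le S x"] card_Pdown_less[of S x le, OF less.prems that]
      finite_Pdown[OF less.prems] by fastforce
  then have "card S \<notin> follower_values le S"
    unfolding follower_values_def by blast
  then show ?case
    using gnum_aux_eq_mex[OF less.prems] mex_le by metis
qed

lemma gnum_aux_image:
  assumes "finite S" "inj_on f S" "\<And>x y. x \<in> S \<Longrightarrow> y \<in> S \<Longrightarrow> le' (f x) (f y) = le x y"
  shows "gnum_aux le' (f ` S) = gnum_aux le S"
  using assms
proof (induction "card S" arbitrary: S rule: less_induct)
  case less
  have follower_eq: "gnum_aux le' (Pdown le' (f ` S) (f x)) = gnum_aux le (Pdown le S x)"
    if "x \<in> {x \<in> S. le x x}" for x
  proof -
    have "Pdown le' (f ` S) (f x) = f ` Pdown le S x"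
      using less.prems(3) that unfolding Pdown_def by auto
    moreover have "gnum_aux le' (f ` Pdown le S x) = gnum_aux le (Pdown le S x)"
      by (rule less.hyps)
        (use that card_Pdown_less[of S x le, OF less.prems(1)] finite_Pdown[OF less.prems(1)]
          less.prems(2,3) in \<open>auto simp: Pdown_def intro: inj_on_subset\<close>)
    ultimately show ?thesis by simp
  qed
  have reflexive_points: "{u \<in> f ` S. le' u u} = f ` {x \<in> S. le x x}"
    using less.prems(3) by auto
  have "follower_values le' (f ` S) = follower_values le S"
    unfolding follower_values_def reflexive_points image_image using follower_eq
    by (rule image_cong[OF refl])
  then show ?case
    using less.prems(1) by (simp add: gnum_aux_eq_mex)
qed

lemma gnum_aux_lessThan: "gnum_aux (\<le>) {..<n::nat} = n"
proof (induction n rule: less_induct)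
  case (less n)
  have "Pdown (\<le>) {..<n} m = {..<m}" if "m < n" for m
    using that unfolding Pdown_def by auto
  then have "follower_values (\<le>) {..<n} = {..<n}"
    using less.IH by (force simp: follower_values_def image_iff)
  then show ?case
    by (simp add: gnum_aux_eq_mex mex_lessThan)
qed

definition ser_rel :: "('a \<Rightarrow> 'a \<Rightarrow> bool) \<Rightarrow> ('b \<Rightarrow> 'b \<Rightarrow> bool) \<Rightarrow> 'a + 'b \<Rightarrow> 'a + 'b \<Rightarrow> bool" where
  "ser_rel p q = (\<lambda>u v. case (u, v) of (Inl a, Inl b) \<Rightarrow> p a b
                         | (Inr a, Inr b) \<Rightarrow> q a b
                         | (Inr a, Inl b) \<Rightarrow> True
                         | (Inl a, Inr b) \<Rightarrow> False)"

definition par_rel :: "('a \<Rightarrow> 'a \<Rightarrow> bool) \<Rightarrow> ('b \<Rightarrow> 'b \<Rightarrow> bool) \<Rightarrow> 'a + 'b \<Rightarrow> 'a + 'b \<Rightarrow> bool" where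
  "par_rel p q = (\<lambda>u v. case (u, v) of (Inl a, Inl b) \<Rightarrow> p a b
                         | (Inr a, Inr b) \<Rightarrow> q a b
                         | _ \<Rightarrow> False)"

lemma ser_altdef: "ser P Q = (Inl ` fst P \<union> Inr ` fst Q, ser_rel (snd P) (snd Q))"
  by (simp add: ser_def ser_rel_def)

lemma par_altdef: "par P Q = (Inl ` fst P \<union> Inr ` fst Q, par_rel (snd P) (snd Q))"
  by (simp add: par_def par_rel_def)

lemma ser_rel_simps [simp]:
  "ser_rel p q (Inl a) (Inl b) = p a b" "ser_rel p q (Inr c) (Inr d) = q c d"
  "ser_rel p q (Inr c) (Inl b) = True" "ser_rel p q (Inl a) (Inr d) = False"
  by (simp_all add: ser_rel_def)

lemma par_rel_simps [simp]:
  "par_rel p q (Inl a) (Inl b) = p a b" "par_rel p q (Inr c) (Inr d) = q c d"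
  "par_rel p q (Inr c) (Inl b) = False" "par_rel p q (Inl a) (Inr d) = False"
  by (simp_all add: par_rel_def)

lemma gnum_aux_par_rel:
  assumes "finite S" "finite T"
  shows "gnum_aux (par_rel p q) (Inl ` S \<union> Inr ` T) = gnum_aux p S XOR gnum_aux q T"
  using assms
proof (induction "card S + card T" arbitrary: S T rule: less_induct)
  case less
  let ?R = "par_rel p q" and ?U = "Inl ` S \<union> Inr ` T"
  have left: "gnum_aux ?R (Pdown ?R ?U (Inl x)) = gnum_aux p (Pdown p S x) XOR gnum_aux q T"
    if "x \<in> S" "p x x" for x
  proof -
    have "Pdown ?R ?U (Inl x) = Inl ` Pdown p S x \<union> Inr ` T"
      unfolding Pdown_def by auto
    then show ?thesis
      using less.hyps[of "Pdown p S x" T] card_Pdown_less[of S x p, OF less.prems(1) that]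
        less.prems by (simp add: finite_Pdown)
  qed
  have right: "gnum_aux ?R (Pdown ?R ?U (Inr y)) = gnum_aux p S XOR gnum_aux q (Pdown q T y)"
    if "y \<in> T" "q y y" for y
  proof -
    have "Pdown ?R ?U (Inr y) = Inl ` S \<union> Inr ` Pdown q T y"
      unfolding Pdown_def by auto
    then show ?thesis
      using less.hyps[of S "Pdown q T y"] card_Pdown_less[of T y q, OF less.prems(2) that]
        less.prems by (simp add: finite_Pdown)
  qed
  have reflexive_points: "{u \<in> ?U. ?R u u} = Inl ` {x \<in> S. p x x} \<union> Inr ` {y \<in> T. q y y}"
    by auto
  have "follower_values ?R ?U = (\<lambda>m. m XOR gnum_aux q T) ` follower_values p S
      \<union> (\<lambda>n. gnum_aux p S XOR n) ` follower_values q T"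
    unfolding follower_values_def reflexive_points image_Un image_image using left right
    by (auto simp: image_iff)
  then show ?case
    using less.prems by (simp add: gnum_aux_eq_mex mex_nim_sum finite_follower_values)
qed

lemma gnum_aux_ser_rel_lessThan:
  assumes "finite S"
  shows "gnum_aux (ser_rel le (\<le>)) (Inl ` S \<union> Inr ` {..<t::nat}) = t + gnum_aux le S"
  using assms
proof (induction "card S" arbitrary: S rule: less_induct)
  case less
  let ?R = "ser_rel le ((\<le>) :: nat \<Rightarrow> nat \<Rightarrow> bool)" and ?U = "Inl ` S \<union> Inr ` {..<t}"
  have left: "gnum_aux ?R (Pdown ?R ?U (Inl x)) = t + gnum_aux le (Pdown le S x)"
    if "x \<in> S" "le x x" for x
  proof -
    have "Pdown ?R ?U (Inl x) = Inl ` Pdown le S x \<union> Inr ` {..<t}"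
      unfolding Pdown_def by auto
    then show ?thesis
      using less.hyps[of "Pdown le S x"] card_Pdown_less[of S x le, OF less.prems that] less.prems
      by (simp add: finite_Pdown)
  qed
  have right: "gnum_aux ?R (Pdown ?R ?U (Inr j)) = j" if "j < t" for j
  proof -
    have "Pdown ?R ?U (Inr j) = Inr ` {..<j}"
      using that unfolding Pdown_def by auto
    then show ?thesis
      using gnum_aux_image[of "{..<j}" Inr ?R "(\<le>)"] gnum_aux_lessThan by simp
  qed
  have reflexive_points: "{u \<in> ?U. ?R u u} = Inl ` {x \<in> S. le x x} \<union> Inr ` {..<t}"
    by auto
  have "follower_values ?R ?U = (\<lambda>n. t + n) ` follower_values le S \<union> {..<t}"
    unfolding follower_values_def reflexive_points image_Un image_image using left right
    by (auto simp: image_iff)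
  then show ?case
    using less.prems by (simp add: gnum_aux_eq_mex mex_shift finite_follower_values)
qed

lemma finite_par: "finite (fst P) \<Longrightarrow> finite (fst Q) \<Longrightarrow> finite (fst (par P Q))"
  unfolding par_altdef by simp

lemma finite_ser: "finite (fst P) \<Longrightarrow> finite (fst Q) \<Longrightarrow> finite (fst (ser P Q))"
  unfolding ser_altdef by simp

lemma finite_chain: "finite (fst (chain m))"
  unfolding chain_def by simp

lemma g_par: "finite (fst P) \<Longrightarrow> finite (fst Q) \<Longrightarrow> g (par P Q) = g P XOR g Q"
  unfolding par_altdef g_def by (simp add: gnum_aux_par_rel)

lemma g_ser_chain: "finite (fst P) \<Longrightarrow> g (ser P (chain t)) = t + g P"
  unfolding ser_altdef g_def chain_def by (simp add: gnum_aux_ser_rel_lessThan)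

lemma g_chain: "g (chain m) = m"
  unfolding g_def chain_def by (simp add: gnum_aux_lessThan)

lemma g_le_card: "finite (fst P) \<Longrightarrow> g P \<le> card (fst P)"
  unfolding g_def by (rule gnum_aux_le_card)

lemma less_exp_Least: "(m::int) < 2 ^ (LEAST k::nat. m < 2 ^ k)"
proof (rule LeastI_ex)
  have "m \<le> int (nat m)" by simp
  also have "\<dots> < int (2 ^ nat m)"
    by (simp only: of_nat_less_iff less_exp)
  also have "\<dots> = 2 ^ nat m"
    by simp
  finally show "\<exists>k::nat. m < 2 ^ k" ..
qed

lemma g_angle:
  assumes "finite (fst A)"
    and "k = (LEAST k::nat. 2 ^ k > max (int (card (fst A)) - int t) (int t - 1))"
  shows "g (angle A t) = (t + ((2 ^ k - t + g A) XOR 2 ^ k)) XOR g A"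
  unfolding angle_def Let_def assms(2)[symmetric]
  using assms(1) by (simp add: g_par g_ser_chain g_chain finite_par finite_ser finite_chain)

lemma angle_value_below:
  fixes a t :: nat
  assumes "t \<le> 2 ^ k" "a < t"
  shows "(t + ((2 ^ k - t + a) XOR 2 ^ k)) XOR a = 2 ^ (k + 1)"
proof -
  have "t + ((2 ^ k - t + a) XOR 2 ^ k) = a XOR 2 ^ (k + 1)"
    using assms xor_exp_eq_add[of "2 ^ k - t + a" k] xor_exp_eq_add[of a "k + 1"] by simp
  then show ?thesis
    by (simp add: ac_simps flip: xor.assoc)
qed

lemma angle_value_above:
  fixes a t :: nat
  assumes "t \<le> 2 ^ k" "t \<le> a" "a < 2 ^ k + t"
  shows "(t + ((2 ^ k - t + a) XOR 2 ^ k)) XOR a = 0"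
proof -
  have "2 ^ k - t + a = (a - t) XOR 2 ^ k"
    using assms xor_exp_eq_add[of "a - t" k] by simp
  then have "(2 ^ k - t + a) XOR 2 ^ k = a - t"
    by (simp add: xor.assoc)
  then show ?thesis
    using assms by simp
qed

theorem mainTheorem8:
  fixes A :: "'a poset" and t :: nat
  assumes "finite_poset A" and "0 < t"
  defines "k \<equiv> (LEAST k::nat. 2 ^ k > max (int (card (fst A)) - int t) (int t - 1))"
  shows "(g A < t \<longrightarrow> g (angle A t) = 2 ^ (k + 1)) \<and>
         (t \<le> g A \<longrightarrow> g (angle A t) = 0)"
proof -
  have fin: "finite (fst A)"
    using assms(1) unfolding finite_poset_def by simp
  have "max (int (card (fst A)) - int t) (int t - 1) < 2 ^ k"
    unfolding k_def by (rule less_exp_Least)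
  then have "int t - 1 < int (2 ^ k)" "int (card (fst A)) - int t < int (2 ^ k)"
    by auto
  then have "t \<le> 2 ^ k" "card (fst A) < 2 ^ k + t"
    by linarith+
  moreover have "g A \<le> card (fst A)"
    using fin by (rule g_le_card)
  ultimately show ?thesis
    using g_angle[OF fin k_def[THEN meta_eq_to_obj_eq]] angle_value_below angle_value_above by simp
qed

end
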